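(* Let $A=(a_{ij})$ be a real $n\times n$ matrix with nonnegative entries, $\mathbf 1=(1,\ldots,1)^{\mathrm T}$, $L=\operatorname{diag}(A\mathbf 1)-A$, and let $\tau$ satisfy $0<\tau\le\bigl(\max_i\sum_{j\neq i}a_{ij}\bigr)^{-1}$. Let $S$ be the orthogonal projection of $\mathbb R^n$ onto $\mathcal R(L)\oplus\operatorname{span}(\mathbf 1)$, define $\widetilde L=\tau^{-1}(I-S)+LS$, and let $\tilde J$ be the eigenprojection of $L$ corresponding to the eigenvalue $0$. If $x(t)$ is a solution of $\dot x(t)=-\widetilde L\,x(t)$, then $\lim_{t\to\infty}x(t)=\tilde J S\,x(0)$.
   Context: $\mathcal R(M)$ and $\mathcal N(M)$ denote range and null space of a matrix $M$. The index $\operatorname{ind}M$ is the smallest $k\ge0$ with $\operatorname{rank}M^{k+1}=\operatorname{rank}M^k$. The eigenprojection of $M$ corresponding to the eigenvalue $0$ is the idempotent matrix $Z$ with $\mathcal R(Z)=\mathcal N(M^{\nu})$ and $\mathcal N(Z)=\mathcal R(M^{\nu})$, where $\nu=\operatorname{ind}M$. *)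

theory Defs
  imports "HOL-Analysis.Analysis"
begin

primrec mat_pow :: "real^'n^'n \<Rightarrow> nat \<Rightarrow> real^'n^'n" where
  "mat_pow M 0 = mat 1"
| "mat_pow M (Suc k) = M ** mat_pow M k"

definition mat_range :: "real^'n^'m \<Rightarrow> (real^'m) set" where
  "mat_range M = range (\<lambda>x. M *v x)"

definition mat_null :: "real^'n^'m \<Rightarrow> (real^'n) set" where
  "mat_null M = {x. M *v x = 0}"

definition mat_index :: "real^'n^'n \<Rightarrow> nat" where
  "mat_index M = (LEAST k. rank (mat_pow M (Suc k)) = rank (mat_pow M k))"

definition is_eigenprojection_zero :: "real^'n^'n \<Rightarrow> real^'n^'n \<Rightarrow> bool" where
  "is_eigenprojection_zero M Z \<longleftrightarrow>
     Z ** Z = Z \<and>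
     mat_range Z = mat_null (mat_pow M (mat_index M)) \<and>
     mat_null Z = mat_range (mat_pow M (mat_index M))"

definition is_orth_proj :: "real^'n^'n \<Rightarrow> (real^'n) set \<Rightarrow> bool" where
  "is_orth_proj S V \<longleftrightarrow> S ** S = S \<and> transpose S = S \<and> mat_range S = V"

definition ones :: "real^'n" where
  "ones = (\<chi> i. 1)"

definition laplacian :: "real^'n^'n \<Rightarrow> real^'n^'n" where
  "laplacian A = (\<chi> i j. (if i = j then (\<Sum>k\<in>UNIV. A$i$k) else 0) - A$i$j)"

end

theory Submission
  imports Defs "Jordan_Normal_Form.Spectral_Radius"
begin

text \<open>Write \<open>x = S x + (I - S) x\<close>. As \<open>\<R>(L) \<subseteq> \<R>(S)\<close>, the projection \<open>S\<close> commutes with the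
  dynamics: \<open>S x\<close> solves the consensus flow \<open>v' = -L v\<close>, while \<open>(I - S) x\<close> solves
  \<open>u' = -u/\<tau>\<close> and decays exponentially. Along the consensus flow \<open>J v\<close> is conserved. Since the
  weights are nonnegative, \<open>I - \<epsilon> L\<close> is a contraction in the maximum norm for small \<open>\<epsilon>\<close>; hence the
  eigenvalue \<open>0\<close> of \<open>L\<close> is semisimple, and by Gershgorin's theorem the matrix \<open>I - \<epsilon> L - J\<close> has
  its spectrum in the open unit disc. Its powers then decay geometrically (Jordan normal form),
  which yields a quadratic Lyapunov function proving \<open>v(t) - J v(0) \<rightarrow> 0\<close>.\<close>

no_notation Matrix.vec_index (infixl \<open>$\<close> 100)
no_notation Matrix.scalar_prod (infix \<open>\<bullet>\<close> 70)
hide_const (open) Matrix.mat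

lemma laplacian_row_sum:
  fixes z :: "'n::finite \<Rightarrow> 'a::real_algebra_1" and A :: "real^'n^'n"
  shows "(\<Sum>j\<in>UNIV. of_real (laplacian A $ i $ j) * z j)
       = of_real (\<Sum>j\<in>UNIV-{i}. A$i$j) * z i - (\<Sum>j\<in>UNIV-{i}. of_real (A$i$j) * z j)"
proof -
  have "(\<Sum>j\<in>UNIV. of_real (laplacian A $ i $ j) * z j)
      = (\<Sum>j\<in>UNIV. (if i = j then of_real (\<Sum>k\<in>UNIV. A$i$k) * z j else 0) - of_real (A$i$j) * z j)"
    by (rule sum.cong) (auto simp: laplacian_def algebra_simps)
  also have "\<dots> = of_real (\<Sum>k\<in>UNIV. A$i$k) * z i - (\<Sum>j\<in>UNIV. of_real (A$i$j) * z j)"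
    by (simp add: sum_subtractf)
  also have "(\<Sum>k\<in>UNIV. A$i$k) = A$i$i + (\<Sum>k\<in>UNIV-{i}. A$i$k)"
    by (simp add: sum.remove)
  also have "(\<Sum>j\<in>UNIV. of_real (A$i$j) * z j) = of_real (A$i$i) * z i + (\<Sum>j\<in>UNIV-{i}. of_real (A$i$j) * z j)"
    by (simp add: sum.remove)
  finally show ?thesis by (simp add: algebra_simps)
qed

lemma laplacian_mult_vec_nth:
  "(laplacian A *v v) $ i = (\<Sum>j\<in>UNIV-{i}. A$i$j) * v$i - (\<Sum>j\<in>UNIV-{i}. A$i$j * v$j)"
  using laplacian_row_sum[of A i "\<lambda>j. v$j :: real"] by (simp add: matrix_vector_mult_def)

lemma exists_laplacian_step_size:
  fixes A :: "real^'n^'n"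
  obtains \<epsilon> where "\<epsilon> > 0" "\<And>i. \<epsilon> * (\<Sum>j\<in>UNIV-{i}. A$i$j) \<le> 1/2"
proof
  define D where "D = (\<Sum>i\<in>UNIV. \<bar>\<Sum>j\<in>UNIV-{i}. A$i$j\<bar>) + 1"
  have D: "D \<ge> 1" by (simp add: D_def sum_nonneg)
  show "1 / (2 * D) > 0" using D by simp
  fix i
  have "(\<Sum>j\<in>UNIV-{i}. A$i$j) \<le> \<bar>\<Sum>j\<in>UNIV-{i}. A$i$j\<bar>" by simp
  also have "\<dots> \<le> (\<Sum>i\<in>UNIV. \<bar>\<Sum>j\<in>UNIV-{i}. A$i$j\<bar>)"
    by (rule member_le_sum) auto
  also have "\<dots> \<le> D" by (simp add: D_def)
  finally show "1 / (2 * D) * (\<Sum>j\<in>UNIV-{i}. A$i$j) \<le> 1/2"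
    using D by (simp add: field_simps)
qed

lemma abs_laplacian_step_le:
  fixes A :: "real^'n^'n"
  assumes nonneg: "\<And>i j. A$i$j \<ge> 0" and "\<epsilon> \<ge> 0" "\<And>i. \<epsilon> * (\<Sum>j\<in>UNIV-{i}. A$i$j) \<le> 1"
    and bound: "\<And>j. \<bar>v$j\<bar> \<le> M"
  shows "\<bar>(v - \<epsilon> *\<^sub>R (laplacian A *v v))$i\<bar> \<le> M"
proof -
  define d where "d = (\<Sum>j\<in>UNIV-{i}. A$i$j)"
  have eq: "(v - \<epsilon> *\<^sub>R (laplacian A *v v))$i = (1 - \<epsilon>*d) * v$i + \<epsilon> * (\<Sum>j\<in>UNIV-{i}. A$i$j * v$j)"
    by (simp add: laplacian_mult_vec_nth d_def algebra_simps)
  have "\<bar>\<Sum>j\<in>UNIV-{i}. A$i$j * v$j\<bar> \<le> (\<Sum>j\<in>UNIV-{i}. \<bar>A$i$j * v$j\<bar>)" by (rule sum_abs)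
  also have "\<dots> \<le> (\<Sum>j\<in>UNIV-{i}. A$i$j * M)"
    by (rule sum_mono) (simp add: abs_mult nonneg bound mult_left_mono)
  also have "\<dots> = d * M" by (simp add: d_def sum_distrib_right)
  finally have "\<bar>\<epsilon> * (\<Sum>j\<in>UNIV-{i}. A$i$j * v$j)\<bar> \<le> \<epsilon> * (d * M)"
    using \<open>\<epsilon> \<ge> 0\<close> by (simp add: abs_mult mult_left_mono)
  moreover have "\<bar>(1 - \<epsilon>*d) * v$i\<bar> \<le> (1 - \<epsilon>*d) * M"
    using assms(3)[of i] bound[of i] by (simp add: d_def abs_mult mult_left_mono)
  moreover have "(1 - \<epsilon>*d) * M + \<epsilon> * (d * M) = M" by (simp add: algebra_simps)
  ultimately show ?thesis unfolding eq by (smt (verit) abs_triangle_ineq)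
qed

text \<open>If \<open>L\<^sup>2 v = 0\<close> then \<open>v - k \<epsilon> L v = (I - \<epsilon> L)\<^sup>k v\<close>, and \<open>I - \<epsilon> L\<close> does not increase the
  maximum norm; so \<open>v - k \<epsilon> L v\<close> stays bounded, forcing \<open>L v = 0\<close>.\<close>

lemma laplacian_null_square:
  fixes A :: "real^'n^'n"
  assumes nonneg: "\<And>i j. A$i$j \<ge> 0" and LL: "laplacian A *v (laplacian A *v v) = 0"
  shows "laplacian A *v v = 0"
proof -
  obtain \<epsilon> where \<epsilon>: "\<epsilon> > 0" "\<And>i. \<epsilon> * (\<Sum>j\<in>UNIV-{i}. A$i$j) \<le> 1/2"
    using exists_laplacian_step_size[of A] by blast
  have \<epsilon>1: "\<epsilon> * (\<Sum>j\<in>UNIV-{i}. A$i$j) \<le> 1" for i using \<epsilon>(2)[of i] by linarith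
  define w where "w = laplacian A *v v"
  define M where "M = (\<Sum>j\<in>UNIV. \<bar>v$j\<bar>)"
  have Mv: "\<bar>v$j\<bar> \<le> M" for j
    unfolding M_def by (rule member_le_sum) auto
  have bounded: "\<bar>(v - (real k * \<epsilon>) *\<^sub>R w)$i\<bar> \<le> M" for k i
  proof (induction k arbitrary: i)
    case 0 then show ?case using Mv by simp
  next
    case (Suc k)
    define u where "u = v - (real k * \<epsilon>) *\<^sub>R w"
    have "laplacian A *v u = w"
      using LL by (simp add: u_def w_def matrix_vector_mult_diff_distrib matrix_vector_mult_scaleR)
    then have "u - \<epsilon> *\<^sub>R (laplacian A *v u) = v - (real (Suc k) * \<epsilon>) *\<^sub>R w"
      by (simp add: u_def algebra_simps)
    moreover have "\<bar>(u - \<epsilon> *\<^sub>R (laplacian A *v u))$i\<bar> \<le> M"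
      using abs_laplacian_step_le[OF nonneg _ \<epsilon>1, of u M i] \<epsilon>(1) Suc.IH by (simp add: u_def)
    ultimately show ?case by simp
  qed
  have "w$i = 0" for i
  proof (rule ccontr)
    assume "w$i \<noteq> 0"
    then have pos: "\<epsilon> * \<bar>w$i\<bar> > 0" using \<epsilon> by simp
    obtain k where "2*M / (\<epsilon> * \<bar>w$i\<bar>) < real k" using reals_Archimedean2 by blast
    then have "2*M < real k * (\<epsilon> * \<bar>w$i\<bar>)" using pos by (simp add: divide_less_eq)
    moreover have "\<bar>v$i - real k * \<epsilon> * w$i\<bar> \<le> M" using bounded[of k i] by simp
    moreover have "\<bar>real k * \<epsilon> * w$i\<bar> = real k * (\<epsilon> * \<bar>w$i\<bar>)"
      using \<epsilon> by (simp add: abs_mult)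
    ultimately show False using Mv[of i] by linarith
  qed
  then show ?thesis by (simp add: w_def Finite_Cartesian_Product.vec_eq_iff)
qed

lemma mat_pow_Suc_right: "mat_pow M (Suc k) = mat_pow M k ** M"
  by (induction k) (simp_all add: matrix_mul_assoc)

lemma mat_pow_Suc_mult_vec: "mat_pow M (Suc k) *v u = mat_pow M k *v (M *v u)"
  by (simp only: mat_pow_Suc_right matrix_vector_mul_assoc)

lemma mat_pow_mult_vec_eq_0_iff:
  fixes M :: "real^'n^'n"
  assumes null_square: "\<And>v. M *v (M *v v) = 0 \<Longrightarrow> M *v v = 0" and "k \<ge> 1"
  shows "mat_pow M k *v u = 0 \<longleftrightarrow> M *v u = 0"
  using \<open>k \<ge> 1\<close>
proof (induction k arbitrary: u)
  case (Suc m)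
  show ?case
  proof (cases "m = 0")
    case False
    then have "mat_pow M m *v (M *v u) = 0 \<longleftrightarrow> M *v (M *v u) = 0" using Suc.IH by simp
    then show ?thesis using null_square by (metis mat_pow_Suc_mult_vec matrix_vector_mult_0_right)
  qed simp
qed simp

text \<open>The rank of \<open>M\<^sup>k\<close> decreases weakly in \<open>k\<close>, so it is eventually constant and the
  \<open>LEAST\<close> in the definition of the index is attained.\<close>

lemma rank_mat_pow_Suc_mat_index:
  "rank (mat_pow M (Suc (mat_index M))) = rank (mat_pow M (mat_index M))"
proof -
  define r where "r k = rank (mat_pow M k)" for k
  have dec: "r (Suc k) \<le> r k" for k
    unfolding r_def by (simp add: rank_mul_le_right)
  have "\<exists>k. r (Suc k) = r k"
  proof (rule ccontr)
    assume "\<not> ?thesis"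
    then have lt: "r (Suc k) < r k" for k using dec le_neq_implies_less by blast
    have "r k + k \<le> r 0" for k
    proof (induction k)
      case (Suc k) then show ?case using lt[of k] by linarith
    qed simp
    from this[of "Suc (r 0)"] show False by simp
  qed
  then have "r (Suc (LEAST k. r (Suc k) = r k)) = r (LEAST k. r (Suc k) = r k)"
    by (rule LeastI_ex)
  then show ?thesis unfolding mat_index_def r_def .
qed

lemma mat_pow_mat_index_mult_vec_eq_0_iff:
  fixes M :: "real^'n^'n"
  assumes null_square: "\<And>v. M *v (M *v v) = 0 \<Longrightarrow> M *v v = 0"
  shows "mat_pow M (mat_index M) *v u = 0 \<longleftrightarrow> M *v u = 0"
proof (cases "mat_index M = 0")
  case True
  then have "rank M = CARD('n)"
    using rank_mat_pow_Suc_mat_index[of M] rank_I by (simp add: matrix_mul_rid)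
  then have "M *v u = 0 \<longleftrightarrow> u = 0"
    using matrix_nonfull_linear_equations_eq[of M] matrix_vector_mult_0_right by blast
  with True show ?thesis by simp
next
  case False
  then show ?thesis using mat_pow_mult_vec_eq_0_iff[OF null_square] by simp
qed

lemma eigenprojection_zero_idem:
  assumes "is_eigenprojection_zero M Z"
  shows "Z *v (Z *v z) = Z *v z"
  using assms by (simp add: is_eigenprojection_zero_def matrix_vector_mul_assoc)

lemma eigenprojection_zero_range:
  fixes M :: "real^'n^'n"
  assumes Z: "is_eigenprojection_zero M Z" and null_square: "\<And>v. M *v (M *v v) = 0 \<Longrightarrow> M *v v = 0"
  shows "mat_range Z = mat_null M"
  using Z mat_pow_mat_index_mult_vec_eq_0_iff[OF null_square]
  by (auto simp: is_eigenprojection_zero_def mat_null_def)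

lemma mult_vec_eigenprojection_zero:
  fixes M :: "real^'n^'n"
  assumes "is_eigenprojection_zero M Z" and "\<And>v. M *v (M *v v) = 0 \<Longrightarrow> M *v v = 0"
  shows "M *v (Z *v z) = 0"
  using eigenprojection_zero_range[OF assms] by (auto simp: mat_range_def mat_null_def)

lemma eigenprojection_zero_mult_vec:
  fixes M :: "real^'n^'n"
  assumes Z: "is_eigenprojection_zero M Z" and null_square: "\<And>v. M *v (M *v v) = 0 \<Longrightarrow> M *v v = 0"
  shows "Z *v (M *v z) = 0"
proof -
  let ?P = "mat_pow M (mat_index M)"
  have "z - Z *v z \<in> mat_null Z"
    using eigenprojection_zero_idem[OF Z] by (simp add: mat_null_def matrix_vector_mult_diff_distrib)
  then obtain w where w: "z - Z *v z = ?P *v w"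
    using Z by (auto simp: is_eigenprojection_zero_def mat_range_def)
  have "M *v z = M *v (z - Z *v z)"
    using mult_vec_eigenprojection_zero[OF Z null_square] by (simp add: matrix_vector_mult_diff_distrib)
  also have "\<dots> = ?P *v (M *v w)"
    by (simp only: w mat_pow_Suc_mult_vec[symmetric]) (simp add: matrix_vector_mul_assoc)
  finally have "M *v z \<in> mat_range ?P" by (auto simp: mat_range_def)
  then show ?thesis using Z by (auto simp: is_eigenprojection_zero_def mat_null_def)
qed

lemma eigenprojection_zero_eq_0:
  fixes M :: "real^'n^'n"
  assumes Z: "is_eigenprojection_zero M Z" and null_square: "\<And>v. M *v (M *v v) = 0 \<Longrightarrow> M *v v = 0"
    and "M *v u = 0" "Z *v u = 0"
  shows "u = 0"
proof -
  have "u \<in> mat_range Z" using assms(3) by (simp add: eigenprojection_zero_range[OF Z null_square] mat_null_def)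
  then obtain w where "u = Z *v w" by (auto simp: mat_range_def)
  then show ?thesis using eigenprojection_zero_idem[OF Z] assms(4) by simp
qed

definition complex_mult_vec :: "real^'n^'n \<Rightarrow> ('n \<Rightarrow> complex) \<Rightarrow> 'n \<Rightarrow> complex" where
  "complex_mult_vec K z i = (\<Sum>j\<in>UNIV. of_real (K$i$j) * z j)"

definition complex_eigenvalue :: "real^'n^'n \<Rightarrow> complex \<Rightarrow> bool" where
  "complex_eigenvalue K \<mu> \<longleftrightarrow> (\<exists>z. (\<exists>i. z i \<noteq> 0) \<and> (\<forall>i. complex_mult_vec K z i = \<mu> * z i))"

lemma complex_mult_vec_diff:
  "complex_mult_vec (X - Y) z i = complex_mult_vec X z i - complex_mult_vec Y z i"
  by (simp add: complex_mult_vec_def sum_subtractf algebra_simps)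

lemma complex_mult_vec_scaleR:
  "complex_mult_vec (c *\<^sub>R X) z i = of_real c * complex_mult_vec X z i"
  by (simp add: complex_mult_vec_def sum_distrib_left mult.assoc)

lemma complex_mult_vec_mat_1: "complex_mult_vec (mat 1) z i = z i"
proof -
  have "complex_mult_vec (mat 1) z i = (\<Sum>j\<in>UNIV. if i = j then z j else 0)"
    unfolding complex_mult_vec_def by (rule sum.cong) (auto simp: Finite_Cartesian_Product.mat_def)
  then show ?thesis by simp
qed

lemma complex_mult_vec_mult:
  "complex_mult_vec (X ** Y) z i = complex_mult_vec X (complex_mult_vec Y z) i"
proof -
  have "complex_mult_vec (X ** Y) z i = (\<Sum>j\<in>UNIV. \<Sum>k\<in>UNIV. of_real (X$i$k) * (of_real (Y$k$j) * z j))"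
    by (simp add: complex_mult_vec_def matrix_matrix_mult_def of_real_sum sum_distrib_right mult.assoc)
  also have "\<dots> = complex_mult_vec X (complex_mult_vec Y z) i"
    unfolding complex_mult_vec_def sum_distrib_left by (rule sum.swap)
  finally show ?thesis .
qed

lemma complex_mult_vec_mult_const:
  "complex_mult_vec X (\<lambda>j. c * z j) i = c * complex_mult_vec X z i"
  by (simp add: complex_mult_vec_def sum_distrib_left algebra_simps)

lemma complex_mult_vec_0: "complex_mult_vec 0 z i = 0"
  by (simp add: complex_mult_vec_def)

lemma Re_complex_mult_vec: "Re (complex_mult_vec X z i) = (X *v (\<chi> j. Re (z j)))$i"
  by (simp add: complex_mult_vec_def matrix_vector_mult_def)

lemma Im_complex_mult_vec: "Im (complex_mult_vec X z i) = (X *v (\<chi> j. Im (z j)))$i"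
  by (simp add: complex_mult_vec_def matrix_vector_mult_def)

text \<open>Gershgorin's theorem, applied to the row \<open>m\<close> where the eigenvector has an entry of largest
  modulus: \<open>p = 1 - \<epsilon> d\<^sub>m\<close> with \<open>d\<^sub>m\<close> the off-diagonal row sum.\<close>

lemma complex_eigenvalue_laplacian_step_disc:
  fixes A :: "real^'n^'n"
  assumes nonneg: "\<And>i j. A$i$j \<ge> 0" and "\<epsilon> > 0" and small: "\<And>i. \<epsilon> * (\<Sum>j\<in>UNIV-{i}. A$i$j) < 1"
    and "complex_eigenvalue (mat 1 - \<epsilon> *\<^sub>R laplacian A) \<mu>"
  obtains p where "0 < p" "p \<le> 1" "cmod (\<mu> - of_real p) \<le> 1 - p"
proof -
  obtain z i0 where nz: "z i0 \<noteq> 0" and eig: "\<And>i. complex_mult_vec (mat 1 - \<epsilon> *\<^sub>R laplacian A) z i = \<mu> * z i"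
    using assms(4) unfolding complex_eigenvalue_def by blast
  define d where "d i = (\<Sum>j\<in>UNIV-{i}. A$i$j)" for i
  have eqn: "(\<mu> - of_real (1 - \<epsilon> * d i)) * z i = of_real \<epsilon> * (\<Sum>j\<in>UNIV-{i}. of_real (A$i$j) * z j)" for i
  proof -
    have "complex_mult_vec (laplacian A) z i = of_real (d i) * z i - (\<Sum>j\<in>UNIV-{i}. of_real (A$i$j) * z j)"
      unfolding complex_mult_vec_def d_def by (rule laplacian_row_sum)
    then have "\<mu> * z i = z i - of_real \<epsilon> * (of_real (d i) * z i - (\<Sum>j\<in>UNIV-{i}. of_real (A$i$j) * z j))"
      using eig[of i] by (simp add: complex_mult_vec_diff complex_mult_vec_scaleR complex_mult_vec_mat_1)
    then show ?thesis by (simp add: algebra_simps)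
  qed
  define mx where "mx = Max (range (\<lambda>j. cmod (z j)))"
  have "mx \<in> range (\<lambda>j. cmod (z j))" unfolding mx_def by (rule Max_in) auto
  then obtain m where m_max: "mx = cmod (z m)" by auto
  have m: "cmod (z j) \<le> cmod (z m)" for j
    unfolding m_max[symmetric] mx_def by (rule Max_ge) auto
  have "cmod (z i0) > 0" using nz by simp
  then have zm: "cmod (z m) > 0" using m[of i0] by linarith
  define p where "p = 1 - \<epsilon> * d m"
  have "d m \<ge> 0" unfolding d_def by (simp add: nonneg sum_nonneg)
  then have p: "0 < p" "p \<le> 1" using small[of m] \<open>\<epsilon> > 0\<close> by (auto simp: p_def d_def)
  have "cmod (\<Sum>j\<in>UNIV-{m}. of_real (A$m$j) * z j) \<le> (\<Sum>j\<in>UNIV-{m}. cmod (of_real (A$m$j) * z j))"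
    by (rule norm_sum)
  also have "\<dots> \<le> (\<Sum>j\<in>UNIV-{m}. A$m$j * cmod (z m))"
    by (rule sum_mono) (simp add: norm_mult nonneg m mult_left_mono)
  also have "\<dots> = d m * cmod (z m)" by (simp add: d_def sum_distrib_right)
  finally have "cmod ((\<mu> - of_real p) * z m) \<le> \<epsilon> * (d m * cmod (z m))"
    using eqn[of m] \<open>\<epsilon> > 0\<close> by (simp add: p_def norm_mult mult_left_mono)
  then have "cmod (\<mu> - of_real p) * cmod (z m) \<le> (1 - p) * cmod (z m)"
    by (simp add: norm_mult p_def)
  then have "cmod (\<mu> - of_real p) \<le> 1 - p" using zm by simp
  with p that show ?thesis by blast
qed

text \<open>The disc of radius \<open>1 - p\<close> around \<open>p\<close> touches the unit circle only at \<open>1\<close>.\<close>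

lemma cmod_le_1_if_in_disc:
  fixes \<mu> :: complex
  assumes h: "cmod (\<mu> - of_real p) \<le> 1 - p" and p: "0 < p" "p \<le> 1"
  shows "cmod \<mu> \<le> 1" and "cmod \<mu> = 1 \<Longrightarrow> \<mu> = 1"
proof -
  have "cmod \<mu> \<le> cmod (\<mu> - of_real p) + cmod (of_real p :: complex)"
    by (metis diff_add_cancel norm_triangle_ineq)
  then show "cmod \<mu> \<le> 1" using h p by simp
  assume e: "cmod \<mu> = 1"
  have "cmod (\<mu> - of_real p) ^ 2 \<le> (1 - p) ^ 2"
    using h by (simp add: power_mono)
  then have h2: "(Re \<mu> - p)^2 + (Im \<mu>)^2 \<le> (1-p)^2" by (simp add: cmod_power2)
  have e2: "(Re \<mu>)^2 + (Im \<mu>)^2 = 1" using e by (metis cmod_power2 power_one)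
  have "(Re \<mu> - p)^2 = (Re \<mu>)^2 - 2*(p*Re \<mu>) + p^2" by (simp add: power2_diff mult.commute)
  moreover have "(1 - p)^2 = 1 - 2*p + p^2" by (simp add: power2_diff)
  ultimately have "p * (Re \<mu> - 1) \<ge> 0" using h2 e2 by (simp add: algebra_simps)
  then have "Re \<mu> \<ge> 1" using p by (simp add: zero_le_mult_iff)
  then have "(Re \<mu>)^2 \<ge> 1" by (simp add: one_le_power)
  then have "(Im \<mu>)^2 \<le> 0" using e2 by linarith
  then have "Im \<mu> = 0" by simp
  then have "(Re \<mu>)^2 = 1" using e2 by simp
  then have "Re \<mu> = 1" using \<open>Re \<mu> \<ge> 1\<close> by (simp add: power2_eq_1_iff)
  with \<open>Im \<mu> = 0\<close> show "\<mu> = 1" by (simp add: complex_eq_iff)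
qed

lemma eigenprojection_zero_mult_deflation:
  fixes M :: "real^'n^'n"
  assumes Z: "is_eigenprojection_zero M Z" and null_square: "\<And>v. M *v (M *v v) = 0 \<Longrightarrow> M *v v = 0"
  shows "Z ** (mat 1 - c *\<^sub>R M - Z) = 0"
  unfolding matrix_eq
proof
  fix y
  have "(Z ** (mat 1 - c *\<^sub>R M - Z)) *v y = Z *v (y - c *\<^sub>R (M *v y) - Z *v y)"
    by (simp add: matrix_vector_mul_assoc[symmetric] matrix_vector_mult_diff_rdistrib
        scaleR_matrix_vector_assoc[symmetric])
  also have "\<dots> = 0"
    by (simp add: matrix_vector_mult_diff_distrib matrix_vector_mult_scaleR
        eigenprojection_zero_mult_vec[OF Z null_square] eigenprojection_zero_idem[OF Z])
  finally show "(Z ** (mat 1 - c *\<^sub>R M - Z)) *v y = 0 *v y" by simp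
qed

lemma complex_mult_vec_eq_0_if_mult_eq_0:
  assumes "X ** Y = 0" and eig: "\<And>i. complex_mult_vec Y z i = \<mu> * z i" and "\<mu> \<noteq> 0"
  shows "complex_mult_vec X z i = 0"
proof -
  have "complex_mult_vec Y z = (\<lambda>j. \<mu> * z j)" using eig by auto
  then have "\<mu> * complex_mult_vec X z i = 0"
    using complex_mult_vec_mult[of X Y z i] assms(1)
    by (simp add: complex_mult_vec_mult_const complex_mult_vec_0)
  then show ?thesis using \<open>\<mu> \<noteq> 0\<close> by simp
qed

lemma complex_mult_vec_common_null:
  fixes X Y :: "real^'n^'n"
  assumes trivial: "\<And>u. X *v u = 0 \<Longrightarrow> Y *v u = 0 \<Longrightarrow> u = 0"
    and "\<And>i. complex_mult_vec X z i = 0" "\<And>i. complex_mult_vec Y z i = 0"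
  shows "z i = 0"
proof -
  have "(\<chi> j. Re (z j)) = 0"
    by (rule trivial) (simp_all add: Finite_Cartesian_Product.vec_eq_iff assms(2,3) flip: Re_complex_mult_vec)
  moreover have "(\<chi> j. Im (z j)) = 0"
    by (rule trivial) (simp_all add: Finite_Cartesian_Product.vec_eq_iff assms(2,3) flip: Im_complex_mult_vec)
  ultimately show ?thesis
    by (simp add: Finite_Cartesian_Product.vec_eq_iff complex_eq_iff)
qed

lemma complex_eigenvalue_deflated_laplacian_step:
  fixes A J :: "real^'n^'n"
  assumes nonneg: "\<And>i j. A$i$j \<ge> 0" and "\<epsilon> > 0" and small: "\<And>i. \<epsilon> * (\<Sum>j\<in>UNIV-{i}. A$i$j) < 1"
    and J: "is_eigenprojection_zero (laplacian A) J"
    and "complex_eigenvalue (mat 1 - \<epsilon> *\<^sub>R laplacian A - J) \<mu>"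
  shows "cmod \<mu> < 1"
proof (cases "\<mu> = 0")
  case False
  let ?L = "laplacian A"
  have null_square: "\<And>v. ?L *v (?L *v v) = 0 \<Longrightarrow> ?L *v v = 0"
    using laplacian_null_square[OF nonneg] by blast
  obtain z i0 where nz: "z i0 \<noteq> 0" and eig: "\<And>i. complex_mult_vec (mat 1 - \<epsilon> *\<^sub>R ?L - J) z i = \<mu> * z i"
    using assms(5) unfolding complex_eigenvalue_def by blast
  have Jz: "complex_mult_vec J z i = 0" for i
    using complex_mult_vec_eq_0_if_mult_eq_0[OF eigenprojection_zero_mult_deflation[OF J null_square] eig False] .
  then have eig': "complex_mult_vec (mat 1 - \<epsilon> *\<^sub>R ?L) z i = \<mu> * z i" for i
    using eig[of i] by (simp add: complex_mult_vec_diff)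
  then obtain p where "0 < p" "p \<le> 1" "cmod (\<mu> - of_real p) \<le> 1 - p"
    using complex_eigenvalue_laplacian_step_disc[OF nonneg \<open>\<epsilon> > 0\<close> small] nz
    unfolding complex_eigenvalue_def by blast
  note disc = cmod_le_1_if_in_disc[OF this(3,1,2)]
  show ?thesis
  proof (rule ccontr)
    assume "\<not> cmod \<mu> < 1"
    then have "\<mu> = 1" using disc by simp
    then have "complex_mult_vec ?L z i = 0" for i
      using eig'[of i] \<open>\<epsilon> > 0\<close> by (simp add: complex_mult_vec_diff complex_mult_vec_scaleR complex_mult_vec_mat_1)
    then have "z i0 = 0"
      using complex_mult_vec_common_null[OF eigenprojection_zero_eq_0[OF J null_square]] Jz by blast
    with nz show False by simp
  qed
qed simp

lemma smult_mat_mult_vec: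
  assumes "A \<in> carrier_mat n n" "v \<in> carrier_vec n"
  shows "(c \<cdot>\<^sub>m A) *\<^sub>v v = (c::complex) \<cdot>\<^sub>v (A *\<^sub>v v)"
  using assms by (intro eq_vecI) (auto simp: scalar_prod_def sum_distrib_left mult.assoc)

lemma smult_pow_mat:
  assumes A: "(A::complex mat) \<in> carrier_mat n n"
  shows "(c \<cdot>\<^sub>m A) ^\<^sub>m k = (c^k) \<cdot>\<^sub>m (A ^\<^sub>m k)"
proof (induction k)
  case 0 then show ?case using A by (intro eq_matI) auto
next
  case (Suc k)
  have "(c \<cdot>\<^sub>m A) ^\<^sub>m Suc k = (c^k \<cdot>\<^sub>m (A ^\<^sub>m k)) * (c \<cdot>\<^sub>m A)" using Suc by simp
  also have "\<dots> = c^k \<cdot>\<^sub>m ((A ^\<^sub>m k) * (c \<cdot>\<^sub>m A))"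
    using A by (intro mult_smult_assoc_mat) auto
  also have "\<dots> = c^k \<cdot>\<^sub>m (c \<cdot>\<^sub>m ((A ^\<^sub>m k) * A))"
    using A by (subst mult_smult_distrib) auto
  also have "\<dots> = (c^Suc k) \<cdot>\<^sub>m (A ^\<^sub>m Suc k)"
    using A by (intro eq_matI) auto
  finally show ?case .
qed

lemma spectral_radius_nonneg:
  assumes "A \<in> carrier_mat n n" "n > 0"
  shows "spectral_radius A \<ge> 0"
  using spectral_radius_mem_max(1)[OF assms] by auto

lemma spectral_radius_smult_less_1:
  fixes A :: "complex mat"
  assumes A: "A \<in> carrier_mat n n" and "n > 0" and "spectral_radius A < r"
  shows "spectral_radius (complex_of_real (1/r) \<cdot>\<^sub>m A) < 1"
proof -
  define B where "B = complex_of_real (1/r) \<cdot>\<^sub>m A"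
  have "r > 0" using spectral_radius_nonneg[OF A \<open>n > 0\<close>] assms(3) by linarith
  have B: "B \<in> carrier_mat n n" using A by (simp add: B_def)
  obtain \<mu> where \<mu>: "\<mu> \<in> spectrum B" "spectral_radius B = cmod \<mu>"
    using spectral_radius_mem_max(1)[OF B \<open>n > 0\<close>] by auto
  then obtain v where v: "v \<in> carrier_vec n" "v \<noteq> 0\<^sub>v n" "B *\<^sub>v v = \<mu> \<cdot>\<^sub>v v"
    using B unfolding spectrum_def eigenvalue_def eigenvector_def by auto
  have AB: "A = complex_of_real r \<cdot>\<^sub>m B"
    using A \<open>r > 0\<close> unfolding B_def by (intro eq_matI) auto
  have "A *\<^sub>v v = (complex_of_real r * \<mu>) \<cdot>\<^sub>v v"
    unfolding AB using v B by (simp add: smult_mat_mult_vec smult_smult_assoc)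
  then have "eigenvalue A (complex_of_real r * \<mu>)"
    unfolding eigenvalue_def eigenvector_def using v A by auto
  then have "cmod (complex_of_real r * \<mu>) \<le> spectral_radius A"
    using spectral_radius_mem_max(2)[OF A \<open>n > 0\<close>] unfolding spectrum_def by auto
  then have "r * cmod \<mu> \<le> spectral_radius A" using \<open>r > 0\<close> by (simp add: norm_mult)
  then have "r * cmod \<mu> < r * 1" using assms(3) by linarith
  then show ?thesis using \<open>r > 0\<close> \<mu> by (simp add: B_def)
qed

text \<open>Scaling \<open>A\<close> by \<open>1/r\<close> for some \<open>r\<close> between the spectral radius and \<open>1\<close> yields a matrix of
  spectral radius below \<open>1\<close>, whose powers are bounded by the Jordan normal form.\<close>

lemma complex_mat_pow_geometric_bound:
  fixes A :: "complex mat"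
  assumes A: "A \<in> carrier_mat n n" and ev: "\<And>\<mu>. eigenvalue A \<mu> \<Longrightarrow> cmod \<mu> < 1"
  obtains c r where "0 < r" "r < 1" "0 \<le> c" "\<And>k. norm_bound (A ^\<^sub>m k) (c * r^k)"
proof (cases "n = 0")
  case True
  then have "norm_bound (A ^\<^sub>m k) 0" for k
    using A by (auto simp: norm_bound_def)
  then show ?thesis using that[of "1/2" 0] by simp
next
  case False
  define \<rho> where "\<rho> = spectral_radius A"
  obtain \<mu>0 where "\<mu>0 \<in> spectrum A" "\<rho> = cmod \<mu>0"
    using spectral_radius_mem_max(1)[OF A] False \<rho>_def by auto
  then have "\<rho> < 1" "\<rho> \<ge> 0" using ev unfolding spectrum_def by auto
  define r where "r = (1 + \<rho>) / 2"
  have r: "0 < r" "r < 1" "\<rho> < r" using \<open>\<rho> < 1\<close> \<open>\<rho> \<ge> 0\<close> by (auto simp: r_def)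
  define B where "B = complex_of_real (1/r) \<cdot>\<^sub>m A"
  have B: "B \<in> carrier_mat n n" unfolding B_def using A by simp
  have AB: "A = complex_of_real r \<cdot>\<^sub>m B"
    unfolding B_def using A r by (intro eq_matI) auto
  have "spectral_radius B < 1"
    unfolding B_def using spectral_radius_smult_less_1[OF A] False r \<rho>_def by simp
  then obtain c where c: "\<And>k. norm_bound (B ^\<^sub>m k) c"
    using spectral_radius_jnf_norm_bound_less_1_upper_triangular[OF B] by auto
  have "cmod ((B ^\<^sub>m 0) $$ (0,0)) \<le> c"
    using c[of 0] B False unfolding norm_bound_def by (auto simp del: pow_mat.simps)
  then have "c \<ge> 0" using B False by simp
  moreover have "norm_bound (A ^\<^sub>m k) (c * r^k)" for k
  proof
    fix i j assume "i < dim_row (A ^\<^sub>m k)" "j < dim_col (A ^\<^sub>m k)"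
    then have ij: "i < n" "j < n" using A by (auto split: if_splits)
    have "cmod ((A ^\<^sub>m k) $$ (i,j)) = r^k * cmod ((B ^\<^sub>m k) $$ (i,j))"
      unfolding AB smult_pow_mat[OF B] using ij B r by (simp add: norm_mult norm_power)
    also have "\<dots> \<le> r^k * c"
      using c[of k] ij B r unfolding norm_bound_def by (simp add: mult_left_mono)
    finally show "cmod ((A ^\<^sub>m k) $$ (i,j)) \<le> c * r^k" by (simp add: mult.commute)
  qed
  ultimately show ?thesis using that r by blast
qed

definition index_enum :: "nat \<Rightarrow> 'n::finite" where
  "index_enum = (SOME e. bij_betw e {0..<CARD('n)} UNIV)"

definition enum_index :: "'n::finite \<Rightarrow> nat" where
  "enum_index = inv_into {0..<CARD('n)} index_enum"

lemma bij_betw_index_enum: "bij_betw (index_enum :: nat \<Rightarrow> 'n::finite) {0..<CARD('n)} UNIV"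
proof -
  have "\<exists>e. bij_betw e {0..<CARD('n)} (UNIV :: 'n set)"
    using ex_bij_betw_nat_finite[of "UNIV :: 'n set"] by simp
  from someI_ex[OF this] show ?thesis unfolding index_enum_def .
qed

lemma index_enum_enum_index [simp]: "index_enum (enum_index a) = a"
  unfolding enum_index_def by (rule bij_betw_inv_into_right[OF bij_betw_index_enum]) simp

lemma enum_index_less [simp]: "enum_index (a :: 'n::finite) < CARD('n)"
  unfolding enum_index_def using bij_betw_index_enum
  by (metis atLeastLessThan_iff bij_betw_def inv_into_into UNIV_I)

lemma enum_index_index_enum [simp]: "i < CARD('n) \<Longrightarrow> enum_index (index_enum i :: 'n::finite) = i"
  unfolding enum_index_def by (rule bij_betw_inv_into_left[OF bij_betw_index_enum]) simp

lemma sum_index_enum: "(\<Sum>k\<in>{0..<CARD('n)}. f (index_enum k)) = (\<Sum>a\<in>(UNIV :: 'n::finite set). f a)"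
  using sum.reindex_bij_betw[OF bij_betw_index_enum] .

definition to_cmat :: "real^'n^'n \<Rightarrow> complex mat" where
  "to_cmat X = Matrix.mat CARD('n) CARD('n) (\<lambda>(i,j). complex_of_real (X $ index_enum i $ index_enum j))"

lemma to_cmat_carrier: "to_cmat (X :: real^'n^'n) \<in> carrier_mat CARD('n) CARD('n)"
  by (simp add: to_cmat_def)

lemma dim_to_cmat [simp]:
  "dim_row (to_cmat (X :: real^'n^'n)) = CARD('n)" "dim_col (to_cmat (X :: real^'n^'n)) = CARD('n)"
  by (simp_all add: to_cmat_def)

lemma to_cmat_index [simp]:
  "i < CARD('n) \<Longrightarrow> j < CARD('n) \<Longrightarrow>
    to_cmat (X :: real^'n^'n) $$ (i,j) = of_real (X $ index_enum i $ index_enum j)"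
  by (simp add: to_cmat_def)

lemma to_cmat_mult:
  fixes X Y :: "real^'n^'n"
  shows "to_cmat (X ** Y) = to_cmat X * to_cmat Y"
proof (rule eq_matI)
  fix i j assume "i < dim_row (to_cmat X * to_cmat Y)" "j < dim_col (to_cmat X * to_cmat Y)"
  then have ij: "i < CARD('n)" "j < CARD('n)" by auto
  have "(to_cmat X * to_cmat Y) $$ (i,j)
      = (\<Sum>k\<in>{0..<CARD('n)}. of_real (X $ index_enum i $ index_enum k) * of_real (Y $ index_enum k $ index_enum j))"
    using ij by (simp add: scalar_prod_def)
  also have "\<dots> = (\<Sum>a\<in>UNIV. of_real (X $ index_enum i $ a) * of_real (Y $ a $ index_enum j))"
    by (rule sum_index_enum)
  also have "\<dots> = to_cmat (X ** Y) $$ (i,j)"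
    using ij by (simp add: matrix_matrix_mult_def of_real_sum)
  finally show "to_cmat (X ** Y) $$ (i,j) = (to_cmat X * to_cmat Y) $$ (i,j)" by simp
qed auto

lemma to_cmat_mat_pow:
  fixes K :: "real^'n^'n"
  shows "to_cmat (mat_pow K k) = to_cmat K ^\<^sub>m k"
proof (induction k)
  case 0
  have "to_cmat (mat 1 :: real^'n^'n) = 1\<^sub>m CARD('n)"
    by (rule eq_matI) (auto simp: Finite_Cartesian_Product.mat_def, metis enum_index_index_enum)
  then show ?case by simp
next
  case (Suc k) then show ?case by (simp only: mat_pow_Suc_right to_cmat_mult pow_mat.simps)
qed

lemma complex_eigenvalue_if_eigenvalue_to_cmat:
  assumes "eigenvalue (to_cmat K) \<mu>"
  shows "complex_eigenvalue (K :: real^'n^'n) \<mu>"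
proof -
  obtain v where v: "v \<in> carrier_vec CARD('n)" "v \<noteq> 0\<^sub>v CARD('n)" "to_cmat K *\<^sub>v v = \<mu> \<cdot>\<^sub>v v"
    using assms unfolding eigenvalue_def eigenvector_def using to_cmat_carrier by auto
  define z where "z a = vec_index v (enum_index a)" for a :: 'n
  have "complex_mult_vec K z a = \<mu> * z a" for a
  proof -
    have "vec_index (to_cmat K *\<^sub>v v) (enum_index a) = (\<Sum>k\<in>{0..<CARD('n)}. of_real (K $ a $ index_enum k) * z (index_enum k))"
      using v(1) by (simp add: scalar_prod_def z_def)
    also have "\<dots> = complex_mult_vec K z a"
      unfolding complex_mult_vec_def by (rule sum_index_enum)
    finally show ?thesis using v(1,3) by (simp add: z_def)
  qed
  moreover have "\<exists>i. z i \<noteq> 0"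
  proof (rule ccontr)
    assume "\<not> ?thesis"
    then have "vec_index v k = 0" if "k < CARD('n)" for k
      using that enum_index_index_enum[OF that] unfolding z_def by metis
    then have "v = 0\<^sub>v CARD('n)" using v(1) by (intro eq_vecI) auto
    with v(2) show False by simp
  qed
  ultimately show ?thesis unfolding complex_eigenvalue_def by blast
qed

lemma mat_pow_geometric_bound:
  fixes K :: "real^'n^'n"
  assumes "\<And>\<mu>. complex_eigenvalue K \<mu> \<Longrightarrow> cmod \<mu> < 1"
  obtains B r where "0 < r" "r < 1" "0 \<le> B" "\<And>k y. norm (mat_pow K k *v y) \<le> B * r^k * norm y"
proof -
  obtain c r where r: "0 < r" "r < 1" and "0 \<le> c" and c: "\<And>k. norm_bound (to_cmat K ^\<^sub>m k) (c * r^k)"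
    using complex_mat_pow_geometric_bound[OF to_cmat_carrier] assms complex_eigenvalue_if_eigenvalue_to_cmat
    by metis
  have entry: "\<bar>mat_pow K k $ a $ b\<bar> \<le> c * r^k" for k a b
  proof -
    have "to_cmat K ^\<^sub>m k \<in> carrier_mat CARD('n) CARD('n)" by (rule pow_carrier_mat[OF to_cmat_carrier])
    then have "cmod ((to_cmat K ^\<^sub>m k) $$ (enum_index a, enum_index b)) \<le> c * r^k"
      using c[of k] unfolding norm_bound_def by auto
    moreover have "(to_cmat K ^\<^sub>m k) $$ (enum_index a, enum_index b) = of_real (mat_pow K k $ a $ b)"
      by (simp flip: to_cmat_mat_pow)
    ultimately show ?thesis by simp
  qed
  have "norm (mat_pow K k *v y) \<le> (real CARD('n) * real CARD('n) * c) * r^k * norm y" for k y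
  proof -
    have "norm (mat_pow K k *v y) \<le> onorm ((*v) (mat_pow K k)) * norm y"
      by (rule onorm[OF matrix_vector_mul_bounded_linear])
    also have "\<dots> \<le> (real CARD('n) * real CARD('n) * (c * r^k)) * norm y"
      by (rule mult_right_mono[OF onorm_le_matrix_component[OF entry]]) simp
    finally show ?thesis by (simp add: algebra_simps)
  qed
  with r \<open>0 \<le> c\<close> show ?thesis using that[of r "real CARD('n) * real CARD('n) * c"] by simp
qed

lemma has_vector_derivative_at_if_within_atLeast:
  assumes "(f has_vector_derivative f') (at t within {a..})" and "a < t"
  shows "(f has_vector_derivative f') (at t)"
proof -
  have "(f has_vector_derivative f') (at t within {a<..})"
    by (rule has_vector_derivative_within_subset[OF assms(1)]) auto
  moreover have "at t within {a<..} = at t"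
    by (rule at_within_open) (use assms(2) in auto)
  ultimately show ?thesis by simp
qed

lemma lyapunov_tendsto_zero:
  fixes q :: "real \<Rightarrow> 'a::real_normed_vector" and W :: "'a \<Rightarrow> real"
  assumes "\<alpha> > 0" and W_ge: "\<And>z. norm z ^ 2 \<le> W z"
    and dW: "\<And>t. a \<le> t \<Longrightarrow> ((\<lambda>s. W (q s)) has_real_derivative W' t) (at t)"
    and decay: "\<And>t. a \<le> t \<Longrightarrow> W' t \<le> -\<alpha> * W (q t)"
  shows "(q \<longlongrightarrow> 0) at_top"
proof -
  define g where "g s = exp (\<alpha> * s) * W (q s)" for s
  have g_le: "g t \<le> g a" if "a \<le> t" for t
  proof (rule DERIV_nonpos_imp_nonincreasing[OF that])
    fix s assume "a \<le> s"
    have "((\<lambda>s. exp (\<alpha> * s)) has_real_derivative exp (\<alpha> * s) * \<alpha>) (at s)"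
      by (auto intro!: derivative_eq_intros)
    from DERIV_mult[OF this dW[OF \<open>a \<le> s\<close>]]
    have "(g has_real_derivative exp (\<alpha> * s) * (\<alpha> * W (q s) + W' s)) (at s)"
      unfolding g_def by (simp add: algebra_simps)
    moreover have "exp (\<alpha> * s) * (\<alpha> * W (q s) + W' s) \<le> 0"
      using decay[OF \<open>a \<le> s\<close>] by (simp add: mult_nonneg_nonpos)
    ultimately show "\<exists>y. (g has_real_derivative y) (at s) \<and> y \<le> 0" by blast
  qed
  have "\<forall>\<^sub>F t in at_top. norm (q t) \<le> sqrt (g a * exp (-(\<alpha> * t)))"
    using eventually_ge_at_top[of a]
  proof eventually_elim
    case (elim t)
    have "exp (-(\<alpha> * t)) * exp (\<alpha> * t) = 1" by (simp add: exp_minus_inverse mult.commute)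
    then have "W (q t) = exp (-(\<alpha> * t)) * g t" by (simp add: g_def mult.assoc[symmetric])
    then have "norm (q t) ^ 2 \<le> exp (-(\<alpha> * t)) * g t" using W_ge[of "q t"] by linarith
    also have "\<dots> \<le> exp (-(\<alpha> * t)) * g a" using g_le[OF elim] by simp
    finally show ?case by (simp add: mult.commute real_le_rsqrt)
  qed
  moreover have "((\<lambda>t. sqrt (g a * exp (-(\<alpha> * t)))) \<longlongrightarrow> 0) at_top"
  proof -
    have "filterlim (\<lambda>t. \<alpha> * t) at_top at_top"
      using \<open>\<alpha> > 0\<close> by (intro filterlim_tendsto_pos_mult_at_top[OF tendsto_const] filterlim_ident) auto
    then have "filterlim (\<lambda>t. exp (\<alpha> * t)) at_top at_top"
      by (rule filterlim_compose[OF exp_at_top])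
    then have "((\<lambda>t. inverse (exp (\<alpha> * t))) \<longlongrightarrow> 0) at_top"
      by (rule tendsto_inverse_0_at_top)
    then have "((\<lambda>t. sqrt (g a * exp (-(\<alpha> * t)))) \<longlongrightarrow> sqrt (g a * 0)) at_top"
      unfolding exp_minus by (intro tendsto_real_sqrt tendsto_mult tendsto_const)
    then show ?thesis by simp
  qed
  ultimately show ?thesis by (rule Lim_null_comparison)
qed

lemma tendsto_zero_if_has_vector_derivative_neg_scaleR:
  fixes u :: "real \<Rightarrow> 'a::real_inner"
  assumes "c > 0" and du: "\<And>t. 0 \<le> t \<Longrightarrow> (u has_vector_derivative - (c *\<^sub>R u t)) (at t within {0..})"
  shows "(u \<longlongrightarrow> 0) at_top"
proof (rule lyapunov_tendsto_zero)
  show "2 * c > 0" using \<open>c > 0\<close> by simp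
  show "norm z ^ 2 \<le> z \<bullet> z" for z :: 'a by (simp add: power2_norm_eq_inner)
  fix t :: real assume "1 \<le> t"
  then have "(u has_vector_derivative - (c *\<^sub>R u t)) (at t)"
    using du has_vector_derivative_at_if_within_atLeast[of u _ t 0] by simp
  from bounded_bilinear.has_vector_derivative[OF bounded_bilinear_inner this this]
  show "((\<lambda>s. u s \<bullet> u s) has_real_derivative - (2 * c) * (u t \<bullet> u t)) (at t)"
    by (simp add: has_real_derivative_iff_has_vector_derivative algebra_simps)
qed simp

lemma exists_mat_pow_contraction:
  fixes K :: "real^'n^'n"
  assumes bound: "\<And>k z. norm (mat_pow K k *v z) \<le> B * r^k * norm z" and "0 < r" "r < 1" "0 \<le> B"
  obtains N where "N > 0" "\<And>z. norm (mat_pow K N *v z) \<le> 1/2 * norm z"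
proof -
  obtain N0 where N0: "r^N0 < 1 / (2 * (B + 1))"
    using real_arch_pow_inv[of "1 / (2 * (B + 1))" r] assms by auto
  have "B * r^Suc N0 \<le> (B + 1) * r^N0"
    using assms by (intro mult_mono power_decreasing) auto
  also have "\<dots> \<le> 1/2"
    using N0 \<open>0 \<le> B\<close> by (simp add: field_simps)
  finally have half: "B * r^Suc N0 * norm z \<le> 1/2 * norm z" for z
    by (rule mult_right_mono) simp
  have "norm (mat_pow K (Suc N0) *v z) \<le> 1/2 * norm z" for z
    using order_trans[OF bound[of "Suc N0" z] half[of z]] .
  with that show ?thesis by blast
qed

lemma sum_inner_succ_diff_le:
  fixes a :: "nat \<Rightarrow> 'a::real_inner"
  shows "(\<Sum>k<N. 2 * (a k \<bullet> (a (Suc k) - a k))) \<le> a N \<bullet> a N - a 0 \<bullet> a 0"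
proof -
  have "2 * (a k \<bullet> (a (Suc k) - a k)) \<le> a (Suc k) \<bullet> a (Suc k) - a k \<bullet> a k" for k
    using inner_ge_zero[of "a (Suc k) - a k"]
    by (simp add: inner_diff_left inner_diff_right inner_commute)
  then have "(\<Sum>k<N. 2 * (a k \<bullet> (a (Suc k) - a k))) \<le> (\<Sum>k<N. a (Suc k) \<bullet> a (Suc k) - a k \<bullet> a k)"
    by (rule sum_mono)
  also have "\<dots> = a N \<bullet> a N - a 0 \<bullet> a 0" by (rule sum_lessThan_telescope)
  finally show ?thesis .
qed

definition pow_lyapunov :: "real^'n^'n \<Rightarrow> nat \<Rightarrow> real^'n \<Rightarrow> real" where
  "pow_lyapunov K N z = (\<Sum>k<N. (mat_pow K k *v z) \<bullet> (mat_pow K k *v z))"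

lemma norm_power2_le_pow_lyapunov:
  assumes "N > 0"
  shows "norm z ^ 2 \<le> pow_lyapunov K N z"
proof -
  have "pow_lyapunov K N z = z \<bullet> z + (\<Sum>k\<in>{1..<N}. (mat_pow K k *v z) \<bullet> (mat_pow K k *v z))"
    using assms unfolding pow_lyapunov_def lessThan_atLeast0 by (simp add: sum.atLeast_Suc_lessThan)
  moreover have "0 \<le> (\<Sum>k\<in>{1..<N}. (mat_pow K k *v z) \<bullet> (mat_pow K k *v z))"
    by (rule sum_nonneg) simp
  ultimately show ?thesis by (simp add: power2_norm_eq_inner)
qed

lemma pow_lyapunov_le:
  assumes "\<And>k. norm (mat_pow K k *v z) \<le> B * norm z"
  shows "pow_lyapunov K N z \<le> real N * B^2 * norm z ^ 2"
proof -
  have "(mat_pow K k *v z) \<bullet> (mat_pow K k *v z) \<le> (B * norm z)^2" for k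
    using power_mono[OF assms[of k] norm_ge_zero, of 2] by (simp add: power2_norm_eq_inner)
  then have "pow_lyapunov K N z \<le> (\<Sum>k<N. (B * norm z)^2)"
    unfolding pow_lyapunov_def by (rule sum_mono)
  then show ?thesis by (simp add: power_mult_distrib)
qed

lemma has_real_derivative_pow_lyapunov:
  assumes "(q has_vector_derivative q') (at t)"
  shows "((\<lambda>s. pow_lyapunov K N (q s)) has_real_derivative
      (\<Sum>k<N. 2 * ((mat_pow K k *v q t) \<bullet> (mat_pow K k *v q')))) (at t)"
proof -
  have "((\<lambda>s. pow_lyapunov K N (q s)) has_vector_derivative
      (\<Sum>k<N. 2 * ((mat_pow K k *v q t) \<bullet> (mat_pow K k *v q')))) (at t)"
    unfolding pow_lyapunov_def
  proof (rule has_vector_derivative_sum)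
    fix k
    have d: "((\<lambda>s. mat_pow K k *v q s) has_vector_derivative mat_pow K k *v q') (at t)"
      by (rule bounded_linear.has_vector_derivative[OF matrix_vector_mul_bounded_linear assms])
    from bounded_bilinear.has_vector_derivative[OF bounded_bilinear_inner d d]
    show "((\<lambda>s. (mat_pow K k *v q s) \<bullet> (mat_pow K k *v q s)) has_vector_derivative
        2 * ((mat_pow K k *v q t) \<bullet> (mat_pow K k *v q'))) (at t)"
      by (simp add: inner_commute)
  qed
  then show ?thesis by (simp add: has_real_derivative_iff_has_vector_derivative)
qed

text \<open>Along \<open>\<epsilon> q' = K q - q\<close> the terms \<open>\<parallel>K\<^sup>k q\<parallel>\<^sup>2\<close> telescope: the derivative of the sum is at most
  \<open>(\<parallel>K\<^sup>N q\<parallel>\<^sup>2 - \<parallel>q\<parallel>\<^sup>2) / \<epsilon>\<close>.\<close>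

lemma pow_lyapunov_derivative_le:
  assumes "\<epsilon> > 0" and KN: "norm (mat_pow K N *v z) \<le> 1/2 * norm z"
  shows "(\<Sum>k<N. 2 * ((mat_pow K k *v z) \<bullet> (mat_pow K k *v ((1/\<epsilon>) *\<^sub>R (K *v z - z)))))
    \<le> - (1/(2*\<epsilon>)) * norm z ^ 2"
proof -
  define a where "a k = mat_pow K k *v z" for k
  have step: "mat_pow K k *v ((1/\<epsilon>) *\<^sub>R (K *v z - z)) = (1/\<epsilon>) *\<^sub>R (a (Suc k) - a k)" for k
    by (simp add: a_def matrix_vector_mult_scaleR matrix_vector_mult_diff_distrib
        mat_pow_Suc_mult_vec del: mat_pow.simps)
  have "(\<Sum>k<N. 2 * (a k \<bullet> (mat_pow K k *v ((1/\<epsilon>) *\<^sub>R (K *v z - z)))))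
      = (1/\<epsilon>) * (\<Sum>k<N. 2 * (a k \<bullet> (a (Suc k) - a k)))"
    unfolding step by (simp add: sum_distrib_left mult.left_commute)
  also have "\<dots> \<le> (1/\<epsilon>) * (a N \<bullet> a N - a 0 \<bullet> a 0)"
    using \<open>\<epsilon> > 0\<close> sum_inner_succ_diff_le[of a N] by (simp add: divide_right_mono)
  also have "\<dots> \<le> (1/\<epsilon>) * (- (1/2) * norm z ^ 2)"
  proof (rule mult_left_mono)
    have aN: "norm (a N) \<le> 1/2 * norm z" unfolding a_def by (rule KN)
    have "norm (a N) * norm (a N) \<le> (1/2 * norm z) * (1/2 * norm z)"
      by (rule mult_mono[OF aN aN]) auto
    moreover have "a 0 \<bullet> a 0 = norm z * norm z" by (simp add: a_def flip: power2_eq_square power2_norm_eq_inner)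
    moreover have "a N \<bullet> a N = norm (a N) * norm (a N)" by (simp flip: power2_eq_square power2_norm_eq_inner)
    moreover have "0 \<le> norm z * norm z" by simp
    ultimately show "a N \<bullet> a N - a 0 \<bullet> a 0 \<le> - (1/2) * norm z ^ 2"
      unfolding power2_eq_square by linarith
  qed (use \<open>\<epsilon> > 0\<close> in simp)
  finally show ?thesis by (simp add: a_def)
qed

text \<open>Geometric decay of the powers of \<open>K\<close> makes some \<open>K\<^sup>N\<close> a contraction, and then
  \<open>\<Sum>k<N. \<parallel>K\<^sup>k q\<parallel>\<^sup>2\<close> is a Lyapunov function for \<open>\<epsilon> q' = K q - q\<close>.\<close>

lemma stable_step_flow_tendsto_zero:
  fixes K :: "real^'n^'n" and q :: "real \<Rightarrow> real^'n"
  assumes "\<epsilon> > 0"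
    and bound: "\<And>k z. norm (mat_pow K k *v z) \<le> B * r^k * norm z" and r: "0 < r" "r < 1" and "0 \<le> B"
    and dq: "\<And>t. t > 0 \<Longrightarrow> (q has_vector_derivative ((1/\<epsilon>) *\<^sub>R (K *v q t - q t))) (at t)"
  shows "(q \<longlongrightarrow> 0) at_top"
proof -
  obtain N where "N > 0" and KN: "\<And>z. norm (mat_pow K N *v z) \<le> 1/2 * norm z"
    using exists_mat_pow_contraction[OF bound r \<open>0 \<le> B\<close>] by blast
  have bounded: "norm (mat_pow K k *v z) \<le> B * norm z" for k z
  proof -
    have "B * r^k * norm z \<le> B * 1 * norm z"
      using r \<open>0 \<le> B\<close> by (intro mult_right_mono mult_left_mono) (auto simp: power_le_one)
    then show ?thesis using bound[of k z] by linarith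
  qed
  define C where "C = real N * B^2 + 1"
  have W_le: "pow_lyapunov K N z \<le> C * norm z ^ 2" for z
  proof -
    have "pow_lyapunov K N z \<le> real N * B^2 * norm z ^ 2" by (rule pow_lyapunov_le[OF bounded])
    also have "\<dots> \<le> C * norm z ^ 2" unfolding C_def by (simp add: distrib_right)
    finally show ?thesis .
  qed
  have "C > 0" unfolding C_def by (rule add_nonneg_pos) simp_all
  show ?thesis
  proof (rule lyapunov_tendsto_zero)
    show "1 / (2 * \<epsilon> * C) > 0" using \<open>\<epsilon> > 0\<close> \<open>C > 0\<close> by simp
    show "norm z ^ 2 \<le> pow_lyapunov K N z" for z by (rule norm_power2_le_pow_lyapunov[OF \<open>N > 0\<close>])
    fix t :: real assume "1 \<le> t"
    then show "((\<lambda>s. pow_lyapunov K N (q s)) has_real_derivative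
        (\<Sum>k<N. 2 * ((mat_pow K k *v q t) \<bullet> (mat_pow K k *v ((1/\<epsilon>) *\<^sub>R (K *v q t - q t)))))) (at t)"
      by (intro has_real_derivative_pow_lyapunov dq) simp
    have "pow_lyapunov K N (q t) / C \<le> norm (q t) ^ 2"
      using W_le[of "q t"] \<open>C > 0\<close> by (simp add: pos_divide_le_eq mult.commute)
    then have "- (1/(2*\<epsilon>)) * norm (q t) ^ 2 \<le> - (1 / (2 * \<epsilon> * C)) * pow_lyapunov K N (q t)"
      using \<open>\<epsilon> > 0\<close> by (simp add: field_simps)
    with pow_lyapunov_derivative_le[OF \<open>\<epsilon> > 0\<close> KN]
    show "(\<Sum>k<N. 2 * ((mat_pow K k *v q t) \<bullet> (mat_pow K k *v ((1/\<epsilon>) *\<^sub>R (K *v q t - q t)))))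
        \<le> - (1 / (2 * \<epsilon> * C)) * pow_lyapunov K N (q t)"
      by (rule order_trans)
  qed
qed

lemma matrix_vector_mult_uminus:
  fixes M :: "'a::ring_1^'n^'m"
  shows "M *v (- y) = - (M *v y)"
  using matrix_vector_mult_diff_distrib[of M 0 y] by simp

text \<open>The flow \<open>v' = -L v\<close> preserves \<open>J v\<close>, and \<open>q = v - J v(0)\<close> solves \<open>\<epsilon> q' = K q - q\<close> for
  \<open>K = I - \<epsilon> L - J\<close>, a matrix whose spectrum lies in the open unit disc.\<close>

lemma laplacian_flow_tendsto:
  fixes A J :: "real^'n^'n" and v :: "real \<Rightarrow> real^'n"
  assumes nonneg: "\<And>i j. A$i$j \<ge> 0" and J: "is_eigenprojection_zero (laplacian A) J"
    and dv: "\<And>t. 0 \<le> t \<Longrightarrow> (v has_vector_derivative - (laplacian A *v v t)) (at t within {0..})"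
  shows "(v \<longlongrightarrow> J *v v 0) at_top"
proof -
  let ?L = "laplacian A"
  have null_square: "\<And>v. ?L *v (?L *v v) = 0 \<Longrightarrow> ?L *v v = 0"
    using laplacian_null_square[OF nonneg] by blast
  obtain \<epsilon> where "\<epsilon> > 0" and \<epsilon>: "\<And>i. \<epsilon> * (\<Sum>j\<in>UNIV-{i}. A$i$j) \<le> 1/2"
    using exists_laplacian_step_size[of A] by blast
  have lt1: "\<epsilon> * (\<Sum>j\<in>UNIV-{i}. A$i$j) < 1" for i using \<epsilon>[of i] by linarith
  define K where "K = mat 1 - \<epsilon> *\<^sub>R ?L - J"
  obtain B r where r: "0 < r" "r < 1" and "0 \<le> B"
    and bound: "\<And>k y. norm (mat_pow K k *v y) \<le> B * r^k * norm y"
    using mat_pow_geometric_bound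
      complex_eigenvalue_deflated_laplacian_step[OF nonneg \<open>\<epsilon> > 0\<close> lt1 J]
    unfolding K_def by metis
  have "((\<lambda>t. J *v v t) has_vector_derivative 0) (at t within {0..})" if "0 \<le> t" for t
    using bounded_linear.has_vector_derivative[OF matrix_vector_mul_bounded_linear dv[OF that], of J]
    by (simp add: eigenprojection_zero_mult_vec[OF J null_square] matrix_vector_mult_uminus)
  then have Jv: "J *v v t = J *v v 0" if "0 \<le> t" for t
    using has_vector_derivative_zero_constant[of "{0..}" "\<lambda>t. J *v v t"] that
    by (metis atLeast_iff convex_real_interval(1) order_refl)
  define q where "q t = v t - J *v v 0" for t
  have "(q has_vector_derivative ((1/\<epsilon>) *\<^sub>R (K *v q t - q t))) (at t)" if "0 < t" for t
  proof -
    have "(q has_vector_derivative - (?L *v v t)) (at t within {0..})"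
      unfolding q_def using dv[of t] that by (intro derivative_eq_intros) auto
    moreover have "(1/\<epsilon>) *\<^sub>R (K *v q t - q t) = - (?L *v v t)"
      using Jv[of t] that \<open>\<epsilon> > 0\<close>
      by (simp add: K_def q_def matrix_vector_mult_diff_rdistrib matrix_vector_mult_diff_distrib
          scaleR_matrix_vector_assoc[symmetric] matrix_vector_mult_scaleR
          eigenprojection_zero_idem[OF J] mult_vec_eigenprojection_zero[OF J null_square])
    ultimately show ?thesis
      using has_vector_derivative_at_if_within_atLeast that by fastforce
  qed
  then have "(q \<longlongrightarrow> 0) at_top"
    by (rule stable_step_flow_tendsto_zero[OF \<open>\<epsilon> > 0\<close> bound r \<open>0 \<le> B\<close>])
  then have "((\<lambda>t. q t + J *v v 0) \<longlongrightarrow> 0 + J *v v 0) at_top"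
    by (intro tendsto_add tendsto_const)
  then show ?thesis by (simp add: q_def)
qed

lemma orth_proj_mult_vec:
  assumes "is_orth_proj S V" and "w \<in> V"
  shows "S *v w = w"
proof -
  obtain z where "w = S *v z" using assms by (auto simp: is_orth_proj_def mat_range_def)
  then show ?thesis using assms(1) by (simp add: is_orth_proj_def matrix_vector_mul_assoc)
qed

lemma shifted_matrix_mult_vec:
  fixes S M :: "real^'n^'n"
  shows "(c *\<^sub>R (mat 1 - S) + M ** S) *v y = c *\<^sub>R (y - S *v y) + M *v (S *v y)"
  by (simp add: matrix_vector_mult_add_rdistrib scaleR_matrix_vector_assoc[symmetric]
      matrix_vector_mult_diff_rdistrib matrix_vector_mul_assoc)

theorem theorem6:
  fixes A S J :: "real^'n^'n" and \<tau> :: real and x :: "real \<Rightarrow> real^'n"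
  assumes nonneg: "\<And>i j. A$i$j \<ge> 0"
    and tau_pos: "0 < \<tau>"
    and tau_le: "\<tau> * (MAX i\<in>UNIV. (\<Sum>j\<in>UNIV-{i}. A$i$j)) \<le> 1"
    and S_proj: "is_orth_proj S (span (mat_range (laplacian A) \<union> {ones}))"
    and J_eig: "is_eigenprojection_zero (laplacian A) J"
    and ode: "\<And>t. t \<ge> 0 \<Longrightarrow>
       (x has_vector_derivative
          (- (((1/\<tau>) *\<^sub>R (mat 1 - S) + laplacian A ** S) *v x t))) (at t within {0..})"
  shows "(x \<longlongrightarrow> (J ** S) *v x 0) at_top"
proof -
  let ?L = "laplacian A"
  have SS: "S *v (S *v y) = S *v y" for y
    using S_proj by (simp add: is_orth_proj_def matrix_vector_mul_assoc)
  have SL: "S *v (?L *v y) = ?L *v y" for y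
    by (rule orth_proj_mult_vec[OF S_proj]) (auto simp: mat_range_def intro: span_base)
  have dx: "((\<lambda>t. P *v x t) has_vector_derivative
      - (P *v ((1/\<tau>) *\<^sub>R (x t - S *v x t) + ?L *v (S *v x t)))) (at t within {0..})" if "0 \<le> t" for P t
    using bounded_linear.has_vector_derivative[OF matrix_vector_mul_bounded_linear ode[OF that], of P]
    by (simp only: shifted_matrix_mult_vec matrix_vector_mult_uminus)
  have "((\<lambda>t. S *v x t) has_vector_derivative - (?L *v (S *v x t))) (at t within {0..})"
    if "0 \<le> t" for t
    using dx[OF that, of S]
    by (simp add: matrix_vector_right_distrib matrix_vector_mult_diff_distrib matrix_vector_mult_scaleR SS SL)
  then have v_lim: "((\<lambda>t. S *v x t) \<longlongrightarrow> J *v (S *v x 0)) at_top"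
    by (rule laplacian_flow_tendsto[OF nonneg J_eig])
  have "1/\<tau> > 0" using tau_pos by simp
  moreover have "((\<lambda>t. (mat 1 - S) *v x t) has_vector_derivative - ((1/\<tau>) *\<^sub>R ((mat 1 - S) *v x t)))
      (at t within {0..})" if "0 \<le> t" for t
    using dx[OF that, of "mat 1 - S"]
    by (simp add: matrix_vector_mult_diff_rdistrib matrix_vector_right_distrib
        matrix_vector_mult_diff_distrib matrix_vector_mult_scaleR SS SL)
  ultimately have u_lim: "((\<lambda>t. (mat 1 - S) *v x t) \<longlongrightarrow> 0) at_top"
    by (rule tendsto_zero_if_has_vector_derivative_neg_scaleR)
  from tendsto_add[OF v_lim u_lim] show ?thesis
    by (simp add: matrix_vector_mult_diff_rdistrib matrix_vector_mul_assoc)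
qed

end
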